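(* Let $\mathcal H$ be a well-structured preconditioner set. For all $M_1,M_2\in\mathcal S^d_{++}$, $P_{\mathcal H}(M_1+M_2)^2=P_{\mathcal H}(M_1)^2+P_{\mathcal H}(M_2)^2$; for every $M\in\mathcal S^d_{++}$ and $c>0$, $P_{\mathcal H}(cM)^2=cP_{\mathcal H}(M)^2$; and for all $A,B\in\mathcal S^d_{++}$ with $A\preceq B$, $P_{\mathcal H}(A)\preceq P_{\mathcal H}(B)$.
   Context: $\mathcal S^d_+$ (resp. $\mathcal S^d_{++}$) denotes the set of real symmetric positive semidefinite (resp. positive definite) $d\times d$ matrices; $\langle A,B\rangle=\operatorname{Tr}(A^\top B)$. A set $\mathcal H\subseteq\mathcal S_+^d$ is a well-structured preconditioner set if $\mathcal H=\mathcal S_+^d\cap\mathcal K$ for some set $\mathcal K$ of real $d\times d$ matrices that is closed under scalar multiplication, matrix addition and matrix multiplication and contains the identity $I_d$. For $M\in\mathcal S^d_{++}$, $P_{\mathcal H}(M):=\arg\min_{H\in\mathcal H\cap\mathcal S^d_{++}}\langle M,H^{-1}\rangle+\operatorname{Tr}(H)$ (the minimizer exists and is unique). *)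

theory Defs
  imports "HOL-Analysis.Analysis"
begin

text \<open>Real d x d matrices are rendered as real^'d^'d, d = CARD('d).\<close>

definition psd :: "real^'d^'d \<Rightarrow> bool" where
  "psd A \<longleftrightarrow> transpose A = A \<and> (\<forall>x. 0 \<le> x \<bullet> (A *v x))"

definition pd :: "real^'d^'d \<Rightarrow> bool" where
  "pd A \<longleftrightarrow> transpose A = A \<and> (\<forall>x. x \<noteq> 0 \<longrightarrow> 0 < x \<bullet> (A *v x))"

definition frob :: "real^'d^'d \<Rightarrow> real^'d^'d \<Rightarrow> real" where
  "frob A B = trace (transpose A ** B)"

definition loewner_le :: "real^'d^'d \<Rightarrow> real^'d^'d \<Rightarrow> bool" where
  "loewner_le A B \<longleftrightarrow> psd (B - A)"

definition well_structured :: "(real^'d^'d) set \<Rightarrow> bool" where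
  "well_structured H \<longleftrightarrow> (\<exists>K :: (real^'d^'d) set.
      (\<forall>c A. A \<in> K \<longrightarrow> c *\<^sub>R A \<in> K) \<and>
      (\<forall>A B. A \<in> K \<longrightarrow> B \<in> K \<longrightarrow> A + B \<in> K) \<and>
      (\<forall>A B. A \<in> K \<longrightarrow> B \<in> K \<longrightarrow> A ** B \<in> K) \<and>
      mat 1 \<in> K \<and>
      H = {A. psd A} \<inter> K)"

definition precond_obj :: "real^'d^'d \<Rightarrow> real^'d^'d \<Rightarrow> real" where
  "precond_obj M G = frob M (matrix_inv G) + trace G"

definition P_H :: "(real^'d^'d) set \<Rightarrow> real^'d^'d \<Rightarrow> real^'d^'d" where
  "P_H H M = (THE G. G \<in> H \<and> pd G \<and>
      (\<forall>G'\<in>H. pd G' \<longrightarrow> precond_obj M G \<le> precond_obj M G'))"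

end

theory Submission
  imports Defs
begin

text \<open>Let \<open>W\<close> be the space of symmetric matrices in \<open>K\<close> and \<open>S\<close> the orthogonal (Frobenius)
  projection of \<open>M\<close> onto \<open>W\<close>. A function of a symmetric element of \<open>K\<close> is again in \<open>K\<close>, since
  on the finite spectrum it is a polynomial; so \<open>W\<close> contains \<open>G\<^sup>-\<^sup>1\<close> for every positive
  definite \<open>G \<in> K\<close>, and on the feasible set the objective \<open>\<langle>M, G\<^sup>-\<^sup>1\<rangle> + Tr G\<close> does not change
  when \<open>M\<close> is replaced by \<open>S\<close>. Testing \<open>M\<close> against the spectral projectors of \<open>S\<close>, which lie
  in \<open>W\<close>, shows that \<open>S\<close> is positive (semi)definite when \<open>M\<close> is. Writing \<open>S = R\<^sup>2\<close> with
  \<open>R = S\<^sup>1\<^sup>/\<^sup>2 \<in> K\<close>, the objective at any positive definite \<open>G\<close> exceeds its value \<open>2 Tr R\<close>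
  at \<open>R\<close> by \<open>\<Sum>\<^sub>u |(R - G) u|\<^sup>2 / \<lambda>\<^sub>u\<close>, summed over an orthonormal eigenbasis of \<open>G\<close>.
  Hence \<open>P\<^sub>H(M)\<^sup>2 = S\<close>, which is linear in \<open>M\<close> and monotone; monotonicity of \<open>P\<^sub>H\<close> itself
  follows because \<open>A\<^sup>2 \<preceq> B\<^sup>2\<close> implies \<open>A \<preceq> B\<close> for positive semidefinite \<open>A\<close>, \<open>B\<close>.\<close>

lemma transpose_add: "transpose (A + B) = transpose A + transpose (B :: 'a::plus^'n^'m)"
  by (simp add: transpose_def vec_eq_iff)

lemma transpose_diff: "transpose (A - B) = transpose A - transpose (B :: 'a::minus^'n^'m)"
  by (simp add: transpose_def vec_eq_iff)

lemma symmetric_matrix_inner_commute: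
  fixes S :: "real^'n^'n"
  assumes "transpose S = S"
  shows "x \<bullet> (S *v y) = (S *v x) \<bullet> y"
  by (metis assms dot_lmul_matrix transpose_matrix_vector)

lemma pd_imp_psd: "pd A \<Longrightarrow> psd A"
  unfolding pd_def psd_def by (metis inner_zero_left order_le_less)

lemma pd_add: "pd A \<Longrightarrow> pd B \<Longrightarrow> pd (A + B)"
  unfolding pd_def
  by (auto simp: transpose_add matrix_vector_mult_add_rdistrib inner_add_right add_pos_pos)

lemma pd_scaleR: "pd A \<Longrightarrow> 0 < c \<Longrightarrow> pd (c *\<^sub>R A)"
  unfolding pd_def by (auto simp: transpose_scalar scaleR_matrix_vector_assoc[symmetric])

lemma frob_eq_inner: "frob A B = A \<bullet> B"
  unfolding frob_def trace_def matrix_matrix_mult_def transpose_def inner_vec_def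
  by (simp, subst sum.swap, simp)

lemma matrix_inv_unique:
  fixes A X :: "real^'n^'n"
  assumes "A ** X = mat 1" and "X ** A = mat 1"
  shows "matrix_inv A = X"
proof -
  have "A ** matrix_inv A = mat 1 \<and> matrix_inv A ** A = mat 1"
    unfolding matrix_inv_def by (rule someI[of _ X]) (use assms in blast)
  then have "matrix_inv A = matrix_inv A ** (A ** X)" and "matrix_inv A ** A = mat 1"
    using assms by simp_all
  then show ?thesis by (simp add: matrix_mul_assoc)
qed

section \<open>Spectral theorem for symmetric matrices\<close>

lemma linear_le_quadratic_imp_nonpos:
  fixes a C :: real
  assumes "\<And>t. 2 * t * a \<le> t\<^sup>2 * C"
  shows "a \<le> 0"
proof (rule ccontr)
  assume "\<not> a \<le> 0"
  then have a: "a > 0" by simp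
  define t where "t = a / (\<bar>C\<bar> + 1)"
  have t: "t > 0" unfolding t_def using a by simp
  have "2 * t * a \<le> t\<^sup>2 * \<bar>C\<bar>"
    using assms[of t] by (meson abs_ge_self mult_left_mono order_trans zero_le_power2)
  then have "2 * a \<le> t * \<bar>C\<bar>" using t by (simp add: power2_eq_square)
  also have "t * \<bar>C\<bar> = a * (\<bar>C\<bar> / (\<bar>C\<bar> + 1))" unfolding t_def by simp
  also have "\<dots> \<le> a * 1" using a by (intro mult_left_mono) auto
  finally show False using a by simp
qed

text \<open>If \<open>v\<close> were not an eigenvector, moving it towards its residual \<open>S v - \<lambda> v \<in> V\<close>
  would increase the Rayleigh quotient.\<close>

lemma rayleigh_max_imp_eigenvector:
  fixes S :: "real^'n^'n"
  assumes sym: "transpose S = S" and V: "subspace V" and inv: "\<And>x. x \<in> V \<Longrightarrow> S *v x \<in> V"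
    and v: "v \<in> V" "norm v = 1"
    and max: "\<And>y. y \<in> V \<Longrightarrow> norm y = 1 \<Longrightarrow> y \<bullet> (S *v y) \<le> v \<bullet> (S *v v)"
  shows "S *v v = (v \<bullet> (S *v v)) *\<^sub>R v"
proof -
  define l where "l = v \<bullet> (S *v v)"
  define w where "w = S *v v - l *\<^sub>R v"
  have vv: "v \<bullet> v = 1" using v(2) by (simp add: power2_norm_eq_inner[symmetric])
  have wV: "w \<in> V" unfolding w_def using V inv v(1) by (simp add: subspace_diff subspace_mul)
  have "w \<bullet> v = (S *v v) \<bullet> v - l * (v \<bullet> v)" by (simp add: w_def inner_diff_left)
  then have wv: "w \<bullet> v = 0" by (simp add: vv l_def inner_commute)
  have rayleigh: "y \<bullet> (S *v y) \<le> l * (y \<bullet> y)" if "y \<in> V" for y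
  proof (cases "y = 0")
    case False
    define z where "z = (1 / norm y) *\<^sub>R y"
    have "z \<in> V" "norm z = 1" unfolding z_def using V that False by (simp_all add: subspace_mul)
    then have "z \<bullet> (S *v z) \<le> l" using max l_def by auto
    moreover have "z \<bullet> (S *v z) = (y \<bullet> (S *v y)) / (norm y)\<^sup>2"
      unfolding z_def by (simp add: matrix_vector_mult_scaleR power2_eq_square)
    ultimately show ?thesis using False by (simp add: divide_le_eq power2_norm_eq_inner)
  qed simp
  define a where "a = w \<bullet> w"
  define c where "c = w \<bullet> (S *v w)"
  have "S *v v = w + l *\<^sub>R v" unfolding w_def by simp
  then have wSv: "w \<bullet> (S *v v) = a" using wv by (simp add: a_def inner_add_right)
  have vSw: "v \<bullet> (S *v w) = a"
    using symmetric_matrix_inner_commute[OF sym, of v w] wSv by (simp add: inner_commute)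
  have "2 * t * a \<le> t\<^sup>2 * (l * a - c)" for t
  proof -
    have "v + t *\<^sub>R w \<in> V" using V v(1) wV by (simp add: subspace_add subspace_mul)
    from rayleigh[OF this] have "l + 2 * t * a + t\<^sup>2 * c \<le> l * (1 + t\<^sup>2 * a)"
      by (simp add: matrix_vector_right_distrib inner_add_left inner_add_right vv wv
          inner_commute[of v w] matrix_vector_mult_scaleR l_def[symmetric] c_def[symmetric]
          wSv vSw a_def power2_eq_square algebra_simps)
    then show ?thesis by (simp add: algebra_simps)
  qed
  then have "a \<le> 0" by (rule linear_le_quadratic_imp_nonpos)
  then have "w = 0" unfolding a_def by (metis inner_eq_zero_iff order_antisym inner_ge_zero)
  then show ?thesis unfolding w_def l_def by simp
qed

lemma invariant_subspace_unit_eigenvector: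
  fixes S :: "real^'n^'n"
  assumes sym: "transpose S = S" and V: "subspace V" "V \<noteq> {0}"
    and inv: "\<And>x. x \<in> V \<Longrightarrow> S *v x \<in> V"
  obtains v where "v \<in> V" and "norm v = 1" and "S *v v = (v \<bullet> (S *v v)) *\<^sub>R v"
proof -
  obtain x where x: "x \<in> V" "x \<noteq> 0" using V subspace_0 by blast
  define T where "T = sphere 0 1 \<inter> V"
  have "compact T" unfolding T_def
    by (intro compact_Int_closed compact_sphere closed_subspace V)
  moreover have "(1 / norm x) *\<^sub>R x \<in> T" unfolding T_def using x V by (simp add: subspace_mul)
  then have "T \<noteq> {}" by auto
  moreover have "continuous_on T (\<lambda>y. y \<bullet> (S *v y))"
    by (intro continuous_intros linear_continuous_on linear_linear[THEN iffD1] matrix_vector_mul_linear)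
  ultimately obtain v where "v \<in> T" and vmax: "\<forall>y\<in>T. y \<bullet> (S *v y) \<le> v \<bullet> (S *v v)"
    using continuous_attains_sup by blast
  then have v: "v \<in> V" "norm v = 1" unfolding T_def by auto
  moreover have "S *v v = (v \<bullet> (S *v v)) *\<^sub>R v"
    by (rule rayleigh_max_imp_eigenvector[OF sym V(1) inv v]) (use vmax T_def in auto)
  ultimately show ?thesis by (rule that)
qed

lemma span_insert_orthogonal_complement:
  fixes v :: "'a::real_inner"
  assumes V: "subspace V" and v: "v \<in> V" "v \<bullet> v = 1" and B: "span B = V \<inter> {y. orthogonal v y}"
  shows "span (insert v B) = V"
proof
  show "span (insert v B) \<subseteq> V"
    using v(1) B V span_superset by (intro span_minimal) auto
  show "V \<subseteq> span (insert v B)"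
  proof
    fix y assume y: "y \<in> V"
    have "y - (v \<bullet> y) *\<^sub>R v \<in> span B" unfolding B orthogonal_def using y v V
      by (simp add: subspace_diff subspace_mul inner_diff_right)
    then have "y - (v \<bullet> y) *\<^sub>R v \<in> span (insert v B)" using span_mono[of B "insert v B"] by auto
    moreover have "(v \<bullet> y) *\<^sub>R v \<in> span (insert v B)" by (simp add: span_base span_mul)
    ultimately show "y \<in> span (insert v B)" by (metis diff_add_cancel span_add)
  qed
qed

lemma invariant_subspace_orthonormal_eigenbasis:
  fixes S :: "real^'n^'n"
  assumes sym: "transpose S = S" and "subspace V" and "\<And>x. x \<in> V \<Longrightarrow> S *v x \<in> V"
  shows "\<exists>B. B \<subseteq> V \<and> pairwise orthogonal B \<and> (\<forall>u\<in>B. norm u = 1) \<and> span B = V \<and>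
           (\<forall>u\<in>B. S *v u = (u \<bullet> (S *v u)) *\<^sub>R u)"
  using assms(2,3)
proof (induction "dim V" arbitrary: V rule: less_induct)
  case less
  note V = less.prems(1) and inv = less.prems(2)
  show ?case
  proof (cases "V = {0}")
    case True
    then show ?thesis by (intro exI[of _ "{}"]) auto
  next
    case False
    then obtain v where v: "v \<in> V" "norm v = 1" and ev: "S *v v = (v \<bullet> (S *v v)) *\<^sub>R v"
      using invariant_subspace_unit_eigenvector[OF sym V _ inv] by blast
    have vv: "v \<bullet> v = 1" using v(2) by (simp add: power2_norm_eq_inner[symmetric])
    define V' where "V' = V \<inter> {y. orthogonal v y}"
    have V': "subspace V'" unfolding V'_def by (intro subspace_inter V subspace_orthogonal_to_vector)
    have V'_inv: "S *v y \<in> V'" if "y \<in> V'" for y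
    proof -
      have yV: "y \<in> V" and vy: "v \<bullet> y = 0" using that unfolding V'_def orthogonal_def by auto
      have "v \<bullet> (S *v y) = (S *v v) \<bullet> y" by (rule symmetric_matrix_inner_commute[OF sym])
      also have "\<dots> = 0" by (subst ev) (simp add: vy)
      finally show ?thesis unfolding V'_def orthogonal_def using inv yV by auto
    qed
    have "v \<notin> V'" unfolding V'_def using vv by (auto simp: orthogonal_def)
    then have "V' \<subset> V" using v(1) unfolding V'_def by blast
    then have "dim V' < dim V" using V V' by (metis dim_psubset span_eq_iff)
    from less.hyps[OF this V' V'_inv] obtain B' where
      B': "B' \<subseteq> V'" "pairwise orthogonal B'" "\<forall>u\<in>B'. norm u = 1" "span B' = V'"
          "\<forall>u\<in>B'. S *v u = (u \<bullet> (S *v u)) *\<^sub>R u" by blast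
    have "span (insert v B') = V"
      using span_insert_orthogonal_complement[OF V v(1) vv] B'(4) V'_def by blast
    moreover have "\<forall>u\<in>B'. orthogonal v u" using B'(1) unfolding V'_def by auto
    ultimately show ?thesis
      using v ev B' V'_def
      by (intro exI[of _ "insert v B'"]) (auto simp: pairwise_insert orthogonal_commute)
  qed
qed

locale orthonormal_eigenbasis =
  fixes S :: "real^'n^'n" and B :: "(real^'n) set"
  assumes basis_finite: "finite B"
    and basis_orthonormal: "u \<in> B \<Longrightarrow> w \<in> B \<Longrightarrow> u \<bullet> w = (if u = w then 1 else 0)"
    and basis_expansion: "x = (\<Sum>u\<in>B. (u \<bullet> x) *\<^sub>R u)"
    and basis_eigenvector: "u \<in> B \<Longrightarrow> S *v u = (u \<bullet> (S *v u)) *\<^sub>R u"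

lemma symmetric_matrix_orthonormal_eigenbasis:
  fixes S :: "real^'n^'n"
  assumes "transpose S = S"
  obtains B where "orthonormal_eigenbasis S B"
proof -
  obtain B where B: "pairwise orthogonal B" "\<forall>u\<in>B. norm u = 1" "span B = UNIV"
      "\<forall>u\<in>B. S *v u = (u \<bullet> (S *v u)) *\<^sub>R u"
    using invariant_subspace_orthonormal_eigenbasis[OF assms subspace_UNIV] by auto
  have "0 \<notin> B" using B(2) by auto
  then have fin: "finite B"
    using B(1) pairwise_orthogonal_independent independent_imp_finite by blast
  have on: "u \<bullet> w = (if u = w then 1 else 0)" if "u \<in> B" "w \<in> B" for u w
    using that B(1,2) by (auto simp: pairwise_def orthogonal_def power2_norm_eq_inner[symmetric])
  have "x = (\<Sum>u\<in>B. (u \<bullet> x) *\<^sub>R u)" for x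
  proof -
    define y where "y = x - (\<Sum>u\<in>B. (u \<bullet> x) *\<^sub>R u)"
    have "w \<bullet> y = 0" if "w \<in> B" for w
    proof -
      have "w \<bullet> (\<Sum>u\<in>B. (u \<bullet> x) *\<^sub>R u) = (\<Sum>u\<in>B. if u = w then w \<bullet> x else 0)"
        unfolding inner_sum_right using on that by (intro sum.cong) auto
      then show ?thesis using fin that by (simp add: y_def inner_diff_right)
    qed
    then have "span B \<subseteq> {z. orthogonal y z}"
      by (intro span_minimal subspace_orthogonal_to_vector) (auto simp: orthogonal_def inner_commute)
    then have "orthogonal y y" using B(3) by auto
    then show ?thesis unfolding y_def by (simp add: orthogonal_def)
  qed
  with fin on B(4) show ?thesis by (intro that) (unfold_locales, auto)
qed

section \<open>Functional calculus\<close>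

definition outer :: "real^'n \<Rightarrow> real^'n \<Rightarrow> real^'n^'n" where
  "outer a b = (\<chi> i j. a $ i * b $ j)"

lemma outer_matrix_vector_mult: "outer a b *v x = (b \<bullet> x) *\<^sub>R a"
  by (auto simp: outer_def matrix_vector_mult_def inner_vec_def vec_eq_iff
      sum_distrib_left sum_distrib_right mult_ac)

lemma inner_outer: "X \<bullet> outer a b = a \<bullet> (X *v b)"
  by (simp add: outer_def matrix_vector_mult_def inner_vec_def sum_distrib_left mult_ac)

lemma matrix_vector_mult_sum: "(\<Sum>u\<in>A. M u) *v x = (\<Sum>u\<in>A. M u *v x)"
  by (induction A rule: infinite_finite_induct) (auto simp: matrix_vector_mult_add_rdistrib)

text \<open>\<open>matrix_fun f S B\<close> is \<open>f(S)\<close> when \<open>B\<close> is an orthonormal eigenbasis of \<open>S\<close>; for unit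
  \<open>u\<close> the eigenvalue is \<open>u \<bullet> (S *v u)\<close>.\<close>

definition matrix_fun :: "(real \<Rightarrow> real) \<Rightarrow> real^'n^'n \<Rightarrow> (real^'n) set \<Rightarrow> real^'n^'n" where
  "matrix_fun f S B = (\<Sum>u\<in>B. f (u \<bullet> (S *v u)) *\<^sub>R outer u u)"

lemma transpose_matrix_fun: "transpose (matrix_fun f S B) = matrix_fun f S B"
  unfolding matrix_fun_def outer_def transpose_def by (simp add: vec_eq_iff mult.commute)

lemma inner_matrix_fun: "X \<bullet> matrix_fun f S B = (\<Sum>u\<in>B. f (u \<bullet> (S *v u)) * (u \<bullet> (X *v u)))"
  unfolding matrix_fun_def by (simp add: inner_sum_right inner_outer)

lemma matrix_fun_cong:
  "(\<And>u. u \<in> B \<Longrightarrow> f (u \<bullet> (S *v u)) = g (u \<bullet> (S *v u))) \<Longrightarrow>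
    matrix_fun f S B = matrix_fun g S B"
  unfolding matrix_fun_def by (intro sum.cong) auto

lemma matrix_fun_add: "matrix_fun (\<lambda>t. f t + g t) S B = matrix_fun f S B + matrix_fun g S B"
  unfolding matrix_fun_def by (simp add: scaleR_add_left sum.distrib)

context orthonormal_eigenbasis
begin

lemma basis_nonzero: "u \<in> B \<Longrightarrow> u \<noteq> 0"
  using basis_orthonormal[of u u] by auto

lemma matrix_eq_on_basis:
  assumes "\<And>u. u \<in> B \<Longrightarrow> X *v u = Y *v u"
  shows "X = Y"
proof -
  have "X *v x = Y *v x" for x
    by (subst (1 2) basis_expansion[of x])
      (simp add: linear_sum[OF matrix_vector_mul_linear] matrix_vector_mult_scaleR assms)
  then show ?thesis by (simp add: matrix_eq)
qed

lemma pd_imp_eigenvalue_pos: "pd S \<Longrightarrow> u \<in> B \<Longrightarrow> 0 < u \<bullet> (S *v u)"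
  using basis_nonzero pd_def by blast

lemma matrix_fun_matrix_vector_mult:
  "matrix_fun f S B *v x = (\<Sum>u\<in>B. (f (u \<bullet> (S *v u)) * (u \<bullet> x)) *\<^sub>R u)"
  unfolding matrix_fun_def matrix_vector_mult_sum
  by (simp add: scaleR_matrix_vector_assoc[symmetric] outer_matrix_vector_mult)

lemma matrix_fun_eigenvector: "u \<in> B \<Longrightarrow> matrix_fun f S B *v u = f (u \<bullet> (S *v u)) *\<^sub>R u"
  using basis_finite unfolding matrix_fun_matrix_vector_mult
  by (simp add: basis_orthonormal if_distrib[of "(*) _"] if_distrib[of "\<lambda>c. c *\<^sub>R _"]
      cong: if_cong)

lemma matrix_fun_id: "matrix_fun (\<lambda>t. t) S B = S"
  by (rule matrix_eq_on_basis) (simp add: matrix_fun_eigenvector flip: basis_eigenvector)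

lemma matrix_fun_const: "matrix_fun (\<lambda>t. c) S B = c *\<^sub>R mat 1"
  by (rule matrix_eq_on_basis) (simp add: matrix_fun_eigenvector flip: scaleR_matrix_vector_assoc)

lemma matrix_fun_mult: "matrix_fun f S B ** matrix_fun g S B = matrix_fun (\<lambda>t. f t * g t) S B"
  by (rule matrix_eq_on_basis) (simp add: matrix_fun_eigenvector matrix_vector_mult_scaleR
      flip: matrix_vector_mul_assoc)

lemma trace_eq_sum_basis: "trace X = (\<Sum>u\<in>B. u \<bullet> (X *v u))"
proof -
  have "trace X = frob X (mat 1)" by (simp add: frob_def trace_def transpose_def)
  also have "\<dots> = X \<bullet> mat 1" by (rule frob_eq_inner)
  also have "\<dots> = (\<Sum>u\<in>B. u \<bullet> (X *v u))"
    using inner_matrix_fun[of X "\<lambda>t. 1" S B] by (simp add: matrix_fun_const)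
  finally show ?thesis .
qed

lemma matrix_fun_quadratic_form:
  "x \<bullet> (matrix_fun f S B *v x) = (\<Sum>u\<in>B. f (u \<bullet> (S *v u)) * (u \<bullet> x)\<^sup>2)"
  unfolding matrix_fun_matrix_vector_mult
  by (simp add: inner_sum_right power2_eq_square inner_commute mult.assoc)

lemma matrix_fun_psd: "(\<And>u. u \<in> B \<Longrightarrow> 0 \<le> f (u \<bullet> (S *v u))) \<Longrightarrow> psd (matrix_fun f S B)"
  unfolding psd_def matrix_fun_quadratic_form using transpose_matrix_fun by (auto intro!: sum_nonneg)

lemma matrix_fun_pd:
  assumes pos: "\<And>u. u \<in> B \<Longrightarrow> 0 < f (u \<bullet> (S *v u))"
  shows "pd (matrix_fun f S B)"
proof -
  have "0 < x \<bullet> (matrix_fun f S B *v x)" if "x \<noteq> 0" for x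
  proof -
    have "\<not> (\<forall>u\<in>B. u \<bullet> x = 0)"
      using that basis_expansion[of x] by force
    then obtain u where u: "u \<in> B" "u \<bullet> x \<noteq> 0" by blast
    show ?thesis unfolding matrix_fun_quadratic_form
    proof (rule sum_pos2[OF basis_finite u(1)])
      show "0 < f (u \<bullet> (S *v u)) * (u \<bullet> x)\<^sup>2" using pos[OF u(1)] u(2) by simp
      show "0 \<le> f (w \<bullet> (S *v w)) * (w \<bullet> x)\<^sup>2" if "w \<in> B" for w
        using pos[OF that] by simp
    qed
  qed
  then show ?thesis unfolding pd_def using transpose_matrix_fun by blast
qed

lemma psd_if_eigenvalues_nonneg: "(\<And>u. u \<in> B \<Longrightarrow> 0 \<le> u \<bullet> (S *v u)) \<Longrightarrow> psd S"
  using matrix_fun_psd[of "\<lambda>t. t"] by (simp add: matrix_fun_id)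

lemma pd_if_eigenvalues_pos: "(\<And>u. u \<in> B \<Longrightarrow> 0 < u \<bullet> (S *v u)) \<Longrightarrow> pd S"
  using matrix_fun_pd[of "\<lambda>t. t"] by (simp add: matrix_fun_id)

lemma pd_matrix_inv:
  assumes "pd S"
  shows "matrix_inv S = matrix_fun inverse S B"
proof (rule matrix_inv_unique)
  have "u \<bullet> (S *v u) \<noteq> 0" if "u \<in> B" for u
    using pd_imp_eigenvalue_pos[OF assms that] by simp
  then have "matrix_fun (\<lambda>t. t * inverse t) S B = matrix_fun (\<lambda>t. 1) S B"
    and "matrix_fun (\<lambda>t. inverse t * t) S B = matrix_fun (\<lambda>t. 1) S B"
    by (auto intro!: matrix_fun_cong)
  then show "S ** matrix_fun inverse S B = mat 1" and "matrix_fun inverse S B ** S = mat 1"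
    using matrix_fun_mult[of "\<lambda>t. t" inverse] matrix_fun_mult[of inverse "\<lambda>t. t"]
    by (simp_all add: matrix_fun_id matrix_fun_const)
qed

end

section \<open>Matrix square roots\<close>

lemma precond_obj_sqrt_gap:
  assumes R: "transpose R = R" and G: "pd G" and eb: "orthonormal_eigenbasis G C"
  shows "precond_obj (R ** R) G = 2 * trace R + (\<Sum>u\<in>C. (norm ((R - G) *v u))\<^sup>2 / (u \<bullet> (G *v u)))"
proof -
  interpret orthonormal_eigenbasis G C by (fact eb)
  have summand: "(norm ((R - G) *v u))\<^sup>2 / (u \<bullet> (G *v u))
      = u \<bullet> ((R ** R) *v u) / (u \<bullet> (G *v u)) - 2 * (u \<bullet> (R *v u)) + u \<bullet> (G *v u)"
    if "u \<in> C" for u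
  proof -
    define l where "l = u \<bullet> (G *v u)"
    have l: "0 < l" unfolding l_def using pd_imp_eigenvalue_pos[OF G that] .
    have uu: "u \<bullet> u = 1" using basis_orthonormal[OF that that] by simp
    have RGu: "(R - G) *v u = R *v u - l *\<^sub>R u"
      using basis_eigenvector[OF that] by (simp add: l_def matrix_vector_mult_diff_rdistrib)
    have RuRu: "(R *v u) \<bullet> (R *v u) = u \<bullet> ((R ** R) *v u)"
      using symmetric_matrix_inner_commute[OF R, of u "R *v u"] by (simp add: matrix_vector_mul_assoc)
    have "(norm ((R - G) *v u))\<^sup>2 = u \<bullet> ((R ** R) *v u) - 2 * l * (u \<bullet> (R *v u)) + l * l"
      unfolding power2_norm_eq_inner RGu
      by (simp add: inner_diff_left inner_diff_right uu RuRu inner_commute[of "R *v u" u] algebra_simps)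
    then show ?thesis using l unfolding l_def[symmetric] by (simp add: field_simps)
  qed
  have "frob (R ** R) (matrix_inv G) = (\<Sum>u\<in>C. u \<bullet> ((R ** R) *v u) / (u \<bullet> (G *v u)))"
    by (simp add: pd_matrix_inv[OF G] frob_eq_inner inner_matrix_fun divide_inverse mult.commute)
  then show ?thesis
    unfolding precond_obj_def trace_eq_sum_basis[of R] trace_eq_sum_basis[of G]
    by (simp add: summand sum.distrib sum_subtractf sum_distrib_left)
qed

lemma sqrt_minimizes_precond_obj:
  assumes R: "pd R" and G: "pd G"
  shows "precond_obj (R ** R) R \<le> precond_obj (R ** R) G"
    and "precond_obj (R ** R) G \<le> precond_obj (R ** R) R \<Longrightarrow> G = R"
proof -
  have symR: "transpose R = R" and symG: "transpose G = G" using R G pd_def by blast+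
  obtain C' where "orthonormal_eigenbasis R C'" using symR by (rule symmetric_matrix_orthonormal_eigenbasis)
  from precond_obj_sqrt_gap[OF symR R this] have objR: "precond_obj (R ** R) R = 2 * trace R" by simp
  obtain C where eb: "orthonormal_eigenbasis G C" using symG by (rule symmetric_matrix_orthonormal_eigenbasis)
  interpret orthonormal_eigenbasis G C by (fact eb)
  define gap where "gap u = (norm ((R - G) *v u))\<^sup>2 / (u \<bullet> (G *v u))" for u
  have gap_nonneg: "0 \<le> gap u" if "u \<in> C" for u
    using pd_imp_eigenvalue_pos[OF G that] by (simp add: gap_def)
  have objG: "precond_obj (R ** R) G = 2 * trace R + sum gap C"
    using precond_obj_sqrt_gap[OF symR G eb] by (simp add: gap_def)
  show "precond_obj (R ** R) R \<le> precond_obj (R ** R) G"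
    using objR objG sum_nonneg[of C gap] gap_nonneg by simp
  assume "precond_obj (R ** R) G \<le> precond_obj (R ** R) R"
  then have "sum gap C = 0" using objR objG sum_nonneg[of C gap] gap_nonneg by simp
  then have gap_zero: "gap u = 0" if "u \<in> C" for u
    using sum_nonneg_eq_0_iff[OF basis_finite] gap_nonneg that by blast
  have "(R - G) *v u = 0 *v u" if "u \<in> C" for u
    using gap_zero[OF that] pd_imp_eigenvalue_pos[OF G that] by (simp add: gap_def)
  then have "R - G = 0" by (rule matrix_eq_on_basis)
  then show "G = R" by simp
qed

lemma loewner_le_square_imp_le:
  assumes A: "psd A" and B: "psd B" and squares: "loewner_le (A ** A) (B ** B)"
  shows "loewner_le A B"
proof -
  have symA: "transpose A = A" and symB: "transpose B = B" using A B psd_def by blast+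
  then have "transpose (B - A) = B - A" by (simp add: transpose_diff)
  then obtain C where eb: "orthonormal_eigenbasis (B - A) C" by (rule symmetric_matrix_orthonormal_eigenbasis)
  interpret orthonormal_eigenbasis "B - A" C by (fact eb)
  show ?thesis unfolding loewner_le_def
  proof (rule psd_if_eigenvalues_nonneg)
    fix u assume u: "u \<in> C"
    define m where "m = u \<bullet> ((B - A) *v u)"
    define a where "a = u \<bullet> (A *v u)"
    have uu: "u \<bullet> u = 1" using basis_orthonormal[OF u u] by simp
    have Bu: "B *v u = A *v u + m *\<^sub>R u"
      using basis_eigenvector[OF u] by (simp add: m_def matrix_vector_mult_diff_rdistrib algebra_simps)
    have a: "0 \<le> a" using A by (simp add: a_def psd_def)
    have "0 \<le> u \<bullet> (B *v u)" using B by (simp add: psd_def)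
    also have "\<dots> = a + m" unfolding Bu a_def by (simp add: inner_add_right uu)
    finally have b: "0 \<le> a + m" .
    have "0 \<le> u \<bullet> ((B ** B - A ** A) *v u)" using squares by (simp add: loewner_le_def psd_def)
    also have "\<dots> = (B *v u) \<bullet> (B *v u) - (A *v u) \<bullet> (A *v u)"
      using symmetric_matrix_inner_commute[OF symB, of u "B *v u"]
        symmetric_matrix_inner_commute[OF symA, of u "A *v u"]
      by (simp add: matrix_vector_mult_diff_rdistrib inner_diff_right matrix_vector_mul_assoc[symmetric])
    also have "\<dots> = m * (a + (a + m))"
      unfolding Bu a_def
      by (simp add: inner_add_left inner_add_right uu inner_commute[of "A *v u" u] algebra_simps)
    finally have "0 \<le> m * (a + (a + m))" .
    \<comment> \<open>if \<open>m < 0\<close> then \<open>a \<ge> -m > 0\<close>, so the second factor is positive\<close>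
    then show "0 \<le> u \<bullet> ((B - A) *v u)"
      unfolding m_def[symmetric] using a b by (smt (verit) mult_neg_pos)
  qed
qed

section \<open>Orthogonal projection onto a subspace\<close>

definition orth_proj :: "'a::euclidean_space set \<Rightarrow> 'a \<Rightarrow> 'a" where
  "orth_proj W x = (SOME y. y \<in> W \<and> (\<forall>w\<in>W. y \<bullet> w = x \<bullet> w))"

context
  fixes W :: "'a::euclidean_space set"
  assumes W: "subspace W"
begin

lemma orth_proj: "orth_proj W x \<in> W \<and> (\<forall>w\<in>W. orth_proj W x \<bullet> w = x \<bullet> w)"
proof -
  obtain y z where yz: "y \<in> span W" "\<And>w. w \<in> span W \<Longrightarrow> orthogonal z w" "x = y + z"
    by (metis orthogonal_subspace_decomp_exists)
  have "y \<in> W" using yz(1) W span_eq_iff by blast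
  moreover have "y \<bullet> w = x \<bullet> w" if "w \<in> W" for w
    using yz(2)[OF span_base[OF that]] yz(3) by (simp add: orthogonal_def inner_add_right inner_commute)
  ultimately have "y \<in> W \<and> (\<forall>w\<in>W. y \<bullet> w = x \<bullet> w)" by blast
  then show ?thesis
    unfolding orth_proj_def by (rule someI[where P = "\<lambda>y. y \<in> W \<and> (\<forall>w\<in>W. y \<bullet> w = x \<bullet> w)"])
qed

lemma orth_proj_in: "orth_proj W x \<in> W"
  using orth_proj by blast

lemma orth_proj_inner: "w \<in> W \<Longrightarrow> orth_proj W x \<bullet> w = x \<bullet> w"
  using orth_proj by blast

lemma orth_proj_unique:
  assumes "y \<in> W" and "\<And>w. w \<in> W \<Longrightarrow> y \<bullet> w = x \<bullet> w"
  shows "orth_proj W x = y"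
proof -
  have "orth_proj W x - y \<in> W" using W assms(1) orth_proj_in by (simp add: subspace_diff)
  then have "(orth_proj W x - y) \<bullet> (orth_proj W x - y) = 0"
    using assms(2) orth_proj_inner by (simp add: inner_diff_left)
  then show ?thesis by simp
qed

lemma orth_proj_add: "orth_proj W (x + y) = orth_proj W x + orth_proj W y"
  using W by (intro orth_proj_unique) (simp_all add: subspace_add orth_proj_in orth_proj_inner inner_add_left)

lemma orth_proj_scaleR: "orth_proj W (c *\<^sub>R x) = c *\<^sub>R orth_proj W x"
  using W by (intro orth_proj_unique) (simp_all add: subspace_mul orth_proj_in orth_proj_inner)

lemma orth_proj_diff: "orth_proj W (x - y) = orth_proj W x - orth_proj W y"
  using orth_proj_add[of "x - y" y] by simp

end

section \<open>Unital matrix algebras\<close>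

locale matrix_algebra =
  fixes K :: "(real^'n^'n) set"
  assumes scaleR_closed: "\<And>c A. A \<in> K \<Longrightarrow> c *\<^sub>R A \<in> K"
    and add_closed: "A \<in> K \<Longrightarrow> B \<in> K \<Longrightarrow> A + B \<in> K"
    and mult_closed: "A \<in> K \<Longrightarrow> B \<in> K \<Longrightarrow> A ** B \<in> K"
    and one_closed: "mat 1 \<in> K"

lemma well_structured_iff: "well_structured H \<longleftrightarrow> (\<exists>K. matrix_algebra K \<and> H = {A. psd A} \<inter> K)"
  unfolding well_structured_def matrix_algebra_def by blast

definition symmetric_part :: "(real^'n^'n) set \<Rightarrow> (real^'n^'n) set" where
  "symmetric_part K = {X \<in> K. transpose X = X}"

context matrix_algebra
begin

lemma subspace_symmetric_part: "subspace (symmetric_part K)"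
proof -
  have "0 \<in> K" using scaleR_closed[OF one_closed, of 0] by simp
  then show ?thesis unfolding subspace_def symmetric_part_def
    by (auto simp: add_closed scaleR_closed transpose_add transpose_scalar transpose_def vec_eq_iff)
qed

text \<open>On the finite spectrum, \<open>f\<close> agrees with a polynomial (Newton interpolation), and
  polynomials in \<open>S\<close> lie in \<open>K\<close>.\<close>

lemma matrix_fun_in_algebra:
  assumes eb: "orthonormal_eigenbasis S B" and S: "S \<in> K"
  shows "matrix_fun f S B \<in> K"
proof -
  interpret orthonormal_eigenbasis S B by (fact eb)
  have const: "matrix_fun (\<lambda>t. c) S B \<in> K" for c
    using scaleR_closed[OF one_closed] by (simp add: matrix_fun_const)
  have shift: "matrix_fun (\<lambda>t. t - c) S B \<in> K" for c
  proof -
    have "matrix_fun (\<lambda>t. t + - c) S B = S + matrix_fun (\<lambda>t. - c) S B"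
      by (simp only: matrix_fun_add matrix_fun_id)
    then show ?thesis using add_closed[OF S const] by simp
  qed
  have "\<exists>g. matrix_fun g S B \<in> K \<and> (\<forall>t\<in>L. g t = f t)" if "finite L" for L and f :: "real \<Rightarrow> real"
    using that
  proof (induction L arbitrary: f rule: finite_induct)
    case empty
    then show ?case using const by blast
  next
    case (insert m L)
    obtain g where g: "matrix_fun g S B \<in> K" "\<forall>t\<in>L. g t = (f t - f m) / (t - m)"
      using insert.IH[of "\<lambda>t. (f t - f m) / (t - m)"] by blast
    let ?h = "\<lambda>t. f m + (t - m) * g t"
    have "matrix_fun ?h S B = matrix_fun (\<lambda>t. f m) S B + matrix_fun (\<lambda>t. t - m) S B ** matrix_fun g S B"
      by (simp only: matrix_fun_add matrix_fun_mult)
    then have "matrix_fun ?h S B \<in> K" using const shift g(1) by (simp add: add_closed mult_closed)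
    moreover have "\<forall>t\<in>insert m L. ?h t = f t" using g(2) insert.hyps(2) by auto
    ultimately show ?case by blast
  qed
  then obtain g where "matrix_fun g S B \<in> K" "\<forall>t\<in>(\<lambda>u. u \<bullet> (S *v u)) ` B. g t = f t"
    using basis_finite by blast
  moreover have "matrix_fun g S B = matrix_fun f S B"
    using calculation(2) by (intro matrix_fun_cong) auto
  ultimately show ?thesis by simp
qed

lemma matrix_fun_in_symmetric_part:
  "orthonormal_eigenbasis S B \<Longrightarrow> S \<in> K \<Longrightarrow> matrix_fun f S B \<in> symmetric_part K"
  using matrix_fun_in_algebra transpose_matrix_fun unfolding symmetric_part_def by blast

lemma matrix_inv_in_symmetric_part:
  assumes "G \<in> K" and "pd G"
  shows "matrix_inv G \<in> symmetric_part K"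
proof -
  obtain C where "orthonormal_eigenbasis G C"
    using symmetric_matrix_orthonormal_eigenbasis assms(2) pd_def by blast
  then show ?thesis
    using assms orthonormal_eigenbasis.pd_matrix_inv matrix_fun_in_symmetric_part by metis
qed

lemma pd_sqrt_in_algebra:
  assumes "S \<in> K" and "pd S"
  obtains R where "R \<in> K" and "pd R" and "R ** R = S"
proof -
  obtain B where eb: "orthonormal_eigenbasis S B"
    using symmetric_matrix_orthonormal_eigenbasis assms(2) pd_def by blast
  interpret orthonormal_eigenbasis S B by (fact eb)
  have pos: "0 < u \<bullet> (S *v u)" if "u \<in> B" for u
    using pd_imp_eigenvalue_pos assms(2) that by blast
  show ?thesis
  proof (rule that)
    show "matrix_fun sqrt S B \<in> K" by (rule matrix_fun_in_algebra[OF eb assms(1)])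
    show "pd (matrix_fun sqrt S B)" using pos by (intro matrix_fun_pd) simp
    have "matrix_fun sqrt S B ** matrix_fun sqrt S B = matrix_fun (\<lambda>t. t) S B"
      unfolding matrix_fun_mult using pos by (intro matrix_fun_cong) (simp add: less_imp_le)
    then show "matrix_fun sqrt S B ** matrix_fun sqrt S B = S" by (simp add: matrix_fun_id)
  qed
qed

lemma orth_proj_eigenspace_trace:
  assumes S: "S = orth_proj (symmetric_part K) M" and eb: "orthonormal_eigenbasis S B"
  shows "c * card {u \<in> B. u \<bullet> (S *v u) = c} =
    (\<Sum>u \<in> {u \<in> B. u \<bullet> (S *v u) = c}. u \<bullet> (M *v u))"
proof -
  interpret orthonormal_eigenbasis S B by (fact eb)
  let ?E = "matrix_fun (\<lambda>t. if t = c then 1 else 0) S B"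
  have "S \<in> K" using S orth_proj_in[OF subspace_symmetric_part] symmetric_part_def by auto
  then have "S \<bullet> ?E = M \<bullet> ?E"
    using S orth_proj_inner[OF subspace_symmetric_part matrix_fun_in_symmetric_part[OF eb]] by simp
  then have "(\<Sum>u \<in> {u \<in> B. u \<bullet> (S *v u) = c}. c) =
      (\<Sum>u \<in> {u \<in> B. u \<bullet> (S *v u) = c}. u \<bullet> (M *v u))"
    using basis_finite by (simp add: inner_matrix_fun sum.inter_filter if_distrib[of "\<lambda>x. x * _"]
        del: sum_constant cong: if_cong)
  then show ?thesis by (simp add: mult.commute)
qed

lemma orth_proj_psd:
  assumes "psd M"
  shows "psd (orth_proj (symmetric_part K) M)" (is "psd ?S")
proof -
  have "transpose ?S = ?S" using orth_proj_in[OF subspace_symmetric_part] symmetric_part_def by auto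
  then obtain B where eb: "orthonormal_eigenbasis ?S B" by (rule symmetric_matrix_orthonormal_eigenbasis)
  interpret orthonormal_eigenbasis ?S B by (fact eb)
  show ?thesis
  proof (rule psd_if_eigenvalues_nonneg)
    fix u assume "u \<in> B"
    let ?B0 = "{w \<in> B. w \<bullet> (?S *v w) = u \<bullet> (?S *v u)}"
    have "0 < card ?B0" using \<open>u \<in> B\<close> basis_finite by (auto simp: card_gt_0_iff)
    moreover have "0 \<le> (\<Sum>w\<in>?B0. w \<bullet> (M *v w))" using assms by (auto simp: psd_def intro: sum_nonneg)
    then have "0 \<le> u \<bullet> (?S *v u) * card ?B0"
      using orth_proj_eigenspace_trace[OF refl eb, of "u \<bullet> (?S *v u)"] by simp
    ultimately show "0 \<le> u \<bullet> (?S *v u)" by (simp add: zero_le_mult_iff)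
  qed
qed

lemma orth_proj_pd:
  assumes "pd M"
  shows "pd (orth_proj (symmetric_part K) M)" (is "pd ?S")
proof -
  have "transpose ?S = ?S" using orth_proj_in[OF subspace_symmetric_part] symmetric_part_def by auto
  then obtain B where eb: "orthonormal_eigenbasis ?S B" by (rule symmetric_matrix_orthonormal_eigenbasis)
  interpret orthonormal_eigenbasis ?S B by (fact eb)
  show ?thesis
  proof (rule pd_if_eigenvalues_pos)
    fix u assume "u \<in> B"
    let ?B0 = "{w \<in> B. w \<bullet> (?S *v w) = u \<bullet> (?S *v u)}"
    have "u \<in> ?B0" "finite ?B0" using \<open>u \<in> B\<close> basis_finite by auto
    then have "0 < card ?B0" by (auto simp: card_gt_0_iff)
    moreover have "0 < (\<Sum>w\<in>?B0. w \<bullet> (M *v w))"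
      using assms \<open>u \<in> ?B0\<close> \<open>finite ?B0\<close> basis_nonzero
      by (intro sum_pos) (auto simp: pd_def)
    then have "0 < u \<bullet> (?S *v u) * card ?B0"
      using orth_proj_eigenspace_trace[OF refl eb, of "u \<bullet> (?S *v u)"] by simp
    ultimately show "0 < u \<bullet> (?S *v u)" by (simp add: zero_less_mult_iff)
  qed
qed

end

lemma (in matrix_algebra) P_H_square:
  assumes M: "pd M"
  defines "H \<equiv> {A. psd A} \<inter> K"
  shows "pd (P_H H M)" and "P_H H M ** P_H H M = orth_proj (symmetric_part K) M"
proof -
  let ?S = "orth_proj (symmetric_part K) M"
  have "?S \<in> K" using orth_proj_in[OF subspace_symmetric_part] symmetric_part_def by auto
  moreover have "pd ?S" using M by (rule orth_proj_pd)
  ultimately obtain R where R: "R \<in> K" "pd R" "R ** R = ?S" by (rule pd_sqrt_in_algebra)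
  have obj: "precond_obj M G = precond_obj ?S G" if "G \<in> K" "pd G" for G
    using orth_proj_inner[OF subspace_symmetric_part matrix_inv_in_symmetric_part[OF that], of M]
    by (simp add: precond_obj_def frob_eq_inner)
  note min = sqrt_minimizes_precond_obj[OF R(2), unfolded R(3)]
  have RH: "R \<in> H" using R pd_imp_psd unfolding H_def by auto
  have "P_H H M = R" unfolding P_H_def
  proof (rule the_equality)
    show "R \<in> H \<and> pd R \<and> (\<forall>G\<in>H. pd G \<longrightarrow> precond_obj M R \<le> precond_obj M G)"
      using RH R obj min(1) unfolding H_def by auto
    fix G assume G: "G \<in> H \<and> pd G \<and> (\<forall>G'\<in>H. pd G' \<longrightarrow> precond_obj M G \<le> precond_obj M G')"
    then have "precond_obj M G \<le> precond_obj M R" using RH R(2) by blast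
    then show "G = R" using G R obj min(2) unfolding H_def by auto
  qed
  with R show "pd (P_H H M)" and "P_H H M ** P_H H M = ?S" by simp_all
qed

theorem lemmaA3:
  fixes H :: "(real^'d^'d) set"
  assumes "well_structured H"
  shows "(\<forall>M1 M2. pd M1 \<longrightarrow> pd M2 \<longrightarrow>
            P_H H (M1 + M2) ** P_H H (M1 + M2) = P_H H M1 ** P_H H M1 + P_H H M2 ** P_H H M2)
       \<and> (\<forall>M (c::real). pd M \<longrightarrow> c > 0 \<longrightarrow>
            P_H H (c *\<^sub>R M) ** P_H H (c *\<^sub>R M) = c *\<^sub>R (P_H H M ** P_H H M))
       \<and> (\<forall>A B. pd A \<longrightarrow> pd B \<longrightarrow> loewner_le A B \<longrightarrow> loewner_le (P_H H A) (P_H H B))"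
proof -
  obtain K where K: "matrix_algebra K" and H: "H = {A. psd A} \<inter> K"
    using assms unfolding well_structured_iff by blast
  interpret matrix_algebra K by (fact K)
  let ?proj = "orth_proj (symmetric_part K)"
  have square: "P_H H M ** P_H H M = ?proj M" and P_H_psd: "psd (P_H H M)" if "pd M" for M
    using P_H_square[OF that] pd_imp_psd unfolding H by auto
  show ?thesis
  proof (intro conjI allI impI)
    fix M1 M2 :: "real^'d^'d" assume "pd M1" "pd M2"
    then show "P_H H (M1 + M2) ** P_H H (M1 + M2) = P_H H M1 ** P_H H M1 + P_H H M2 ** P_H H M2"
      by (simp add: square pd_add orth_proj_add[OF subspace_symmetric_part])
  next
    fix M :: "real^'d^'d" and c :: real assume "pd M" "c > 0"
    then show "P_H H (c *\<^sub>R M) ** P_H H (c *\<^sub>R M) = c *\<^sub>R (P_H H M ** P_H H M)"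
      by (simp add: square pd_scaleR orth_proj_scaleR[OF subspace_symmetric_part])
  next
    fix A B :: "real^'d^'d" assume A: "pd A" and B: "pd B" and "loewner_le A B"
    then have "psd (?proj (B - A))" by (simp add: loewner_le_def orth_proj_psd)
    then have "loewner_le (P_H H A ** P_H H A) (P_H H B ** P_H H B)"
      by (simp add: loewner_le_def square A B orth_proj_diff[OF subspace_symmetric_part])
    then show "loewner_le (P_H H A) (P_H H B)"
      by (rule loewner_le_square_imp_le[OF P_H_psd[OF A] P_H_psd[OF B]])
  qed
qed

end
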